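(* Let $0<\alpha<1$, $\gamma>0$, and let $h$ be a real normalised probability density on $(0,\infty)$ satisfying $$h(x)=\frac{\gamma}{x}\int_0^x\frac{h(u)}{(x-\alpha u)^{\gamma}}\,du,\qquad x\in(0,\infty).$$ Then $h$ is positive and for all $0<x<\infty$, $$\gamma x^{-\gamma-1}\exp\!\left[-(1-\alpha)^{-\gamma}x^{-\gamma}\right]\le h(x)\le \gamma(1-\alpha)^{-\gamma}x^{-\gamma-1}\exp\!\left[-x^{-\gamma}\right].$$ *)

theory Defs
  imports "HOL-Analysis.Analysis"
begin

end

theory Submission
  imports Defs
begin

(* Let H(x) be the integral of h over (0, x). For 0 < u < x the base x - alpha u lies between
   (1 - alpha) x and x, so the equation squeezes h = H' between gamma x^(-gamma-1) H and
   gamma (1 - alpha)^(-gamma) x^(-gamma-1) H. With the integrating factors exp (k x^(-gamma)),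
   k = 1 and k = (1 - alpha)^(-gamma), these differential inequalities say that H exp (x^(-gamma))
   increases and H exp ((1 - alpha)^(-gamma) x^(-gamma)) decreases; both tend to 1 at infinity by
   normalisation, which traps H between the two exponentials, and feeding this back into the
   squeeze gives the bounds on h. That H' = h needs continuity of h, which the equation provides
   by dominated convergence. *)

lemma kernel_base_bounds:
  fixes \<alpha> x u :: real
  assumes "0 \<le> \<alpha>" "\<alpha> < 1" "0 \<le> u" "u \<le> x"
  shows "(1 - \<alpha>) * x \<le> x - \<alpha> * u" and "x - \<alpha> * u \<le> x"
proof -
  have "\<alpha> * u \<le> \<alpha> * x"
    using assms by (simp add: mult_left_mono)
  then show "(1 - \<alpha>) * x \<le> x - \<alpha> * u" "x - \<alpha> * u \<le> x"
    using assms by (simp_all add: algebra_simps)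
qed

lemma inverse_powr_kernel_bounds:
  fixes \<alpha> \<gamma> a x u :: real
  assumes "0 \<le> \<alpha>" "\<alpha> < 1" "0 \<le> \<gamma>" "0 < a" "a \<le> x" "0 \<le> u" "u \<le> x"
  shows "1 / x powr \<gamma> \<le> 1 / (x - \<alpha> * u) powr \<gamma>"
    and "1 / (x - \<alpha> * u) powr \<gamma> \<le> 1 / ((1 - \<alpha>) * a) powr \<gamma>"
proof -
  have "(1 - \<alpha>) * a \<le> (1 - \<alpha>) * x"
    using assms by (simp add: mult_left_mono)
  with kernel_base_bounds[OF assms(1,2,6,7)]
  have lo: "(1 - \<alpha>) * a \<le> x - \<alpha> * u" and hi: "x - \<alpha> * u \<le> x"
    by simp_all
  have pos: "0 < (1 - \<alpha>) * a" using assms by simp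
  have "(x - \<alpha> * u) powr \<gamma> \<le> x powr \<gamma>" "((1 - \<alpha>) * a) powr \<gamma> \<le> (x - \<alpha> * u) powr \<gamma>"
    using pos lo hi \<open>0 \<le> \<gamma>\<close> by (intro powr_mono2; linarith)+
  moreover have "0 < ((1 - \<alpha>) * a) powr \<gamma>" "0 < (x - \<alpha> * u) powr \<gamma>"
    using pos lo by auto
  ultimately show
    "1 / x powr \<gamma> \<le> 1 / (x - \<alpha> * u) powr \<gamma>"
    "1 / (x - \<alpha> * u) powr \<gamma> \<le> 1 / ((1 - \<alpha>) * a) powr \<gamma>"
    by (auto intro!: frac_le)
qed

lemma DERIV_nonneg_imp_le_limit:
  fixes \<phi> \<phi>' :: "real \<Rightarrow> real"
  assumes "\<And>t. x \<le> t \<Longrightarrow> (\<phi> has_real_derivative \<phi>' t) (at t)"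
    and "\<And>t. x \<le> t \<Longrightarrow> 0 \<le> \<phi>' t"
    and "(\<phi> \<longlongrightarrow> L) at_top"
  shows "\<phi> x \<le> L"
proof (rule tendsto_lowerbound[OF assms(3)])
  show "\<forall>\<^sub>F t in at_top. \<phi> x \<le> \<phi> t"
    unfolding eventually_at_top_linorder
  proof (intro exI allI impI)
    fix t
    assume "x \<le> t"
    with assms(1,2) show "\<phi> x \<le> \<phi> t"
      by (intro deriv_nonneg_imp_mono[of x t \<phi> \<phi>']) auto
  qed
qed simp

lemma integrating_factor_le_limit:
  fixes F f :: "real \<Rightarrow> real"
  assumes "0 < \<gamma>" "0 < x"
    and deriv: "\<And>t. x \<le> t \<Longrightarrow> (F has_real_derivative f t) (at t)"
    and ge: "\<And>t. x \<le> t \<Longrightarrow> k * \<gamma> * t powr (- \<gamma> - 1) * F t \<le> f t"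
    and lim: "(F \<longlongrightarrow> L) at_top"
  shows "F x * exp (k * x powr - \<gamma>) \<le> L"
proof -
  have d: "((\<lambda>t. F t * exp (k * t powr - \<gamma>)) has_real_derivative
          exp (k * t powr - \<gamma>) * (f t - k * \<gamma> * t powr (- \<gamma> - 1) * F t)) (at t)"
    if "x \<le> t" for t
    using deriv[OF that] that assms(2) by (auto intro!: derivative_eq_intros simp: algebra_simps)
  have nonneg: "0 \<le> exp (k * t powr - \<gamma>) * (f t - k * \<gamma> * t powr (- \<gamma> - 1) * F t)"
    if "x \<le> t" for t
    using ge[OF that] by simp
  have "((\<lambda>t. t powr - \<gamma>) \<longlongrightarrow> 0) at_top"
    using assms(1) by (intro tendsto_neg_powr filterlim_ident) auto
  then have "((\<lambda>t. F t * exp (k * t powr - \<gamma>)) \<longlongrightarrow> L * exp (k * 0)) at_top"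
    by (intro tendsto_intros lim)
  from DERIV_nonneg_imp_le_limit[OF d nonneg this] show ?thesis
    by simp
qed

lemma integrating_factor_ge_limit:
  fixes F f :: "real \<Rightarrow> real"
  assumes "0 < \<gamma>" "0 < x"
    and deriv: "\<And>t. x \<le> t \<Longrightarrow> (F has_real_derivative f t) (at t)"
    and le: "\<And>t. x \<le> t \<Longrightarrow> f t \<le> k * \<gamma> * t powr (- \<gamma> - 1) * F t"
    and lim: "(F \<longlongrightarrow> L) at_top"
  shows "L \<le> F x * exp (k * x powr - \<gamma>)"
  using integrating_factor_le_limit[of \<gamma> x "\<lambda>t. - F t" "\<lambda>t. - f t" k "- L"] assms
  by (auto intro!: derivative_intros tendsto_minus)

locale density_equation =
  fixes h :: "real \<Rightarrow> real" and \<alpha> \<gamma> :: real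
  assumes alpha: "0 < \<alpha>" "\<alpha> < 1"
    and gamma: "0 < \<gamma>"
    and nonneg: "\<And>x. 0 < x \<Longrightarrow> 0 \<le> h x"
    and integrable: "set_integrable lborel {0<..} h"
    and normalised: "(LINT x:{0<..}|lborel. h x) = 1"
    and eqn: "\<And>x. 0 < x \<Longrightarrow>
       h x = \<gamma> / x * (LINT u:{0<..<x}|lborel. h u / (x - \<alpha> * u) powr \<gamma>)"
begin

definition cdf :: "real \<Rightarrow> real" where
  "cdf x = (LINT u:{0<..<x}|lborel. h u)"

lemma density_set_integrable:
  assumes "A \<subseteq> {0<..}" "A \<in> sets lborel"
  shows "set_integrable lborel A h"
  using set_integrable_subset[OF integrable assms(2,1)] .

lemma restricted_density_measurable [measurable]:
  "(\<lambda>u. indicator {0<..} u * h u) \<in> borel_measurable lborel"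
  using integrable unfolding set_integrable_def by (simp add: borel_measurable_integrable)

lemma kernel_measurable [measurable]:
  "(\<lambda>u. indicator {0<..<x} u * (h u / (x - \<alpha> * u) powr \<gamma>)) \<in> borel_measurable lborel"
proof -
  have "(\<lambda>u. indicator {0<..<x} u * (indicator {0<..} u * h u) / (x - \<alpha> * u) powr \<gamma>)
          \<in> borel_measurable lborel"
    by measurable
  moreover have "(\<lambda>u. indicator {0<..<x} u * (indicator {0<..} u * h u) / (x - \<alpha> * u) powr \<gamma>)
      = (\<lambda>u. indicator {0<..<x} u * (h u / (x - \<alpha> * u) powr \<gamma>))"
    by (auto simp: indicator_def fun_eq_iff)
  ultimately show ?thesis by simp
qed

lemma kernel_le:
  assumes "0 < a" "a \<le> x" "u \<in> {0<..<x}"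
  shows "h u / (x - \<alpha> * u) powr \<gamma> \<le> h u / ((1 - \<alpha>) * a) powr \<gamma>"
proof -
  have "h u * (1 / (x - \<alpha> * u) powr \<gamma>) \<le> h u * (1 / ((1 - \<alpha>) * a) powr \<gamma>)"
    using inverse_powr_kernel_bounds(2)[of \<alpha> \<gamma> a x u] alpha gamma assms nonneg[of u]
    by (intro mult_left_mono) auto
  then show ?thesis by simp
qed

lemma kernel_set_integrable:
  assumes "0 < x"
  shows "set_integrable lborel {0<..<x} (\<lambda>u. h u / (x - \<alpha> * u) powr \<gamma>)"
proof (rule set_integrable_bound)
  show "set_integrable lborel {0<..<x} (\<lambda>u. h u / ((1 - \<alpha>) * x) powr \<gamma>)"
    by (intro set_integrable_divide density_set_integrable) auto
  show "set_borel_measurable lborel {0<..<x} (\<lambda>u. h u / (x - \<alpha> * u) powr \<gamma>)"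
    unfolding set_borel_measurable_def real_scaleR_def by (rule kernel_measurable)
  show "AE u in lborel. u \<in> {0<..<x} \<longrightarrow>
          norm (h u / (x - \<alpha> * u) powr \<gamma>) \<le> norm (h u / ((1 - \<alpha>) * x) powr \<gamma>)"
  proof (rule AE_I2, rule impI)
    fix u :: real
    assume u: "u \<in> {0<..<x}"
    then show "norm (h u / (x - \<alpha> * u) powr \<gamma>) \<le> norm (h u / ((1 - \<alpha>) * x) powr \<gamma>)"
      using kernel_le[OF assms order_refl u] nonneg[of u] u by simp
  qed
qed

lemma density_cdf_bounds:
  assumes "0 < x"
  shows "\<gamma> * x powr (- \<gamma> - 1) * cdf x \<le> h x"
    and "h x \<le> \<gamma> * (1 - \<alpha>) powr (- \<gamma>) * x powr (- \<gamma> - 1) * cdf x"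
proof -
  let ?K = "LINT u:{0<..<x}|lborel. h u / (x - \<alpha> * u) powr \<gamma>"
  have int: "set_integrable lborel {0<..<x} h"
    by (rule density_set_integrable) auto
  have "(LINT u:{0<..<x}|lborel. h u / x powr \<gamma>) \<le> ?K"
  proof (rule set_integral_mono[OF set_integrable_divide[OF int] kernel_set_integrable[OF assms]])
    fix u
    assume u: "u \<in> {0<..<x}"
    have "h u * (1 / x powr \<gamma>) \<le> h u * (1 / (x - \<alpha> * u) powr \<gamma>)"
      using inverse_powr_kernel_bounds(1)[of \<alpha> \<gamma> x x u] alpha gamma assms u nonneg[of u]
      by (intro mult_left_mono) auto
    then show "h u / x powr \<gamma> \<le> h u / (x - \<alpha> * u) powr \<gamma>" by simp
  qed
  then have lower: "cdf x / x powr \<gamma> \<le> ?K"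
    unfolding cdf_def by simp
  have "?K \<le> (LINT u:{0<..<x}|lborel. h u / ((1 - \<alpha>) * x) powr \<gamma>)"
    by (rule set_integral_mono[OF kernel_set_integrable[OF assms] set_integrable_divide[OF int]])
       (rule kernel_le[OF assms order_refl])
  then have upper: "?K \<le> cdf x / ((1 - \<alpha>) * x) powr \<gamma>"
    unfolding cdf_def by simp
  have "0 \<le> \<gamma> / x" using gamma assms by simp
  from mult_left_mono[OF lower this] mult_left_mono[OF upper this]
  have "\<gamma> / x * (cdf x / x powr \<gamma>) \<le> h x" "h x \<le> \<gamma> / x * (cdf x / ((1 - \<alpha>) * x) powr \<gamma>)"
    using eqn[OF assms] by simp_all
  moreover have "\<gamma> / x * (cdf x / x powr \<gamma>) = \<gamma> * x powr (- \<gamma> - 1) * cdf x"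
    and "\<gamma> / x * (cdf x / ((1 - \<alpha>) * x) powr \<gamma>)
           = \<gamma> * (1 - \<alpha>) powr (- \<gamma>) * x powr (- \<gamma> - 1) * cdf x"
    using assms alpha by (simp_all add: powr_diff powr_minus_divide powr_mult)
  ultimately show "\<gamma> * x powr (- \<gamma> - 1) * cdf x \<le> h x"
    "h x \<le> \<gamma> * (1 - \<alpha>) powr (- \<gamma>) * x powr (- \<gamma> - 1) * cdf x"
    by simp_all
qed

lemma kernel_isCont:
  assumes "u \<noteq> x"
  shows "isCont (\<lambda>y. indicator {0<..<y} u * (h u / (y - \<alpha> * u) powr \<gamma>)) x"
proof (cases "0 < u")
  case False
  then show ?thesis by simp
next
  case u: True
  show ?thesis
  proof (cases "u < x")
    case True
    have "(1 - \<alpha>) * x \<le> x - \<alpha> * u"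
      using kernel_base_bounds(1)[of \<alpha> u x] alpha u True by simp
    moreover have "0 < (1 - \<alpha>) * x"
      using alpha u True by simp
    ultimately have "isCont (\<lambda>y. h u / (y - \<alpha> * u) powr \<gamma>) x"
      by (auto intro!: continuous_intros)
    moreover have "\<forall>\<^sub>F y in at x. h u / (y - \<alpha> * u) powr \<gamma>
                     = indicator {0<..<y} u * (h u / (y - \<alpha> * u) powr \<gamma>)"
      using order_tendstoD(1)[OF tendsto_ident_at True] by eventually_elim (use u in simp)
    ultimately show ?thesis
      using u True unfolding isCont_def by (simp add: Lim_transform_eventually)
  next
    case False
    with assms have "x < u" by simp
    have "\<forall>\<^sub>F y in at x. 0 = indicator {0<..<y} u * (h u / (y - \<alpha> * u) powr \<gamma>)"
      using order_tendstoD(2)[OF tendsto_ident_at \<open>x < u\<close>] by eventually_elim simp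
    then have "((\<lambda>y. indicator {0<..<y} u * (h u / (y - \<alpha> * u) powr \<gamma>)) \<longlongrightarrow> 0) (at x)"
      by (rule Lim_transform_eventually[OF tendsto_const])
    then show ?thesis
      using \<open>x < u\<close> unfolding isCont_def by simp
  qed
qed

lemma kernel_integral_continuous_on:
  assumes "0 < a"
  shows "continuous_on {a..b} (\<lambda>x. LINT u:{0<..<x}|lborel. h u / (x - \<alpha> * u) powr \<gamma>)"
proof (rule continuous_on_sequentiallyI)
  fix X :: "nat \<Rightarrow> real" and x
  assume X: "\<forall>n. X n \<in> {a..b}" and lim: "X \<longlonglongrightarrow> x"
  let ?C = "1 / ((1 - \<alpha>) * a) powr \<gamma>"
  have "(\<lambda>n. \<integral>u. indicator {0<..<X n} u * (h u / (X n - \<alpha> * u) powr \<gamma>) \<partial>lborel)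
          \<longlonglongrightarrow> (\<integral>u. indicator {0<..<x} u * (h u / (x - \<alpha> * u) powr \<gamma>) \<partial>lborel)"
  proof (rule integral_dominated_convergence[where w = "\<lambda>u. ?C * (indicator {0<..} u * h u)"])
    show "integrable lborel (\<lambda>u. ?C * (indicator {0<..} u * h u))"
      using integrable unfolding set_integrable_def by simp
    show "AE u in lborel. (\<lambda>n. indicator {0<..<X n} u * (h u / (X n - \<alpha> * u) powr \<gamma>))
            \<longlonglongrightarrow> indicator {0<..<x} u * (h u / (x - \<alpha> * u) powr \<gamma>)"
      using AE_lborel_singleton[of x]
    proof eventually_elim
      case (elim u)
      show ?case
        using isCont_tendsto_compose[OF kernel_isCont[OF elim] lim] .
    qed
    show "AE u in lborel. norm (indicator {0<..<X n} u * (h u / (X n - \<alpha> * u) powr \<gamma>))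
            \<le> ?C * (indicator {0<..} u * h u)" for n
    proof (rule AE_I2)
      fix u
      show "norm (indicator {0<..<X n} u * (h u / (X n - \<alpha> * u) powr \<gamma>))
            \<le> ?C * (indicator {0<..} u * h u)"
        using kernel_le[of a "X n" u] assms X nonneg[of u] by (auto simp: indicator_def)
    qed
  qed (rule kernel_measurable)+
  then show "(\<lambda>n. LINT u:{0<..<X n}|lborel. h u / (X n - \<alpha> * u) powr \<gamma>)
               \<longlonglongrightarrow> (LINT u:{0<..<x}|lborel. h u / (x - \<alpha> * u) powr \<gamma>)"
    unfolding set_lebesgue_integral_def by simp
qed

lemma density_continuous_on:
  assumes "0 < a"
  shows "continuous_on {a..b} h"
proof -
  have "continuous_on {a..b} (\<lambda>x. \<gamma> / x * (LINT u:{0<..<x}|lborel. h u / (x - \<alpha> * u) powr \<gamma>))"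
    using assms by (intro continuous_intros kernel_integral_continuous_on) auto
  then show ?thesis
    by (rule continuous_on_eq) (use assms eqn in auto)
qed

lemma cdf_add_interval_integral:
  assumes "0 \<le> a" "a \<le> y"
  shows "cdf y = cdf a + (LBINT u=a..y. h u)"
proof -
  have "interval_lebesgue_integrable lborel (min 0 (min (ereal a) (ereal y)))
          (max 0 (max (ereal a) (ereal y))) h"
    using assms unfolding interval_lebesgue_integrable_def
    by (auto simp: zero_ereal_def min_def max_def intro!: density_set_integrable)
  from interval_integral_sum[OF this] assms show ?thesis
    by (simp add: cdf_def interval_lebesgue_integral_def zero_ereal_def)
qed

lemma cdf_has_real_derivative:
  assumes "0 < x"
  shows "(cdf has_real_derivative h x) (at x)"
proof -
  define a where "a = x / 2"
  have a: "0 < a" "a < x" "x < 2 * x"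
    using assms by (auto simp: a_def)
  have "((\<lambda>y. LBINT u=a..y. h u) has_vector_derivative h x) (at x within {a..2 * x})"
    using a by (intro interval_integral_FTC2 density_continuous_on) auto
  then have "((\<lambda>y. cdf a + (LBINT u=a..y. h u)) has_real_derivative h x) (at x)"
    using a by (auto intro!: derivative_eq_intros
        simp: at_within_Icc_at has_real_derivative_iff_has_vector_derivative)
  then show ?thesis
    by (rule has_field_derivative_transform_within_open[of _ _ _ "{a<..}"])
       (use a in \<open>auto intro!: cdf_add_interval_integral[symmetric]\<close>)
qed

lemma cdf_tendsto_1: "(cdf \<longlongrightarrow> 1) at_top"
proof -
  have "((\<lambda>t. \<integral>u. indicator {0<..<t} u * h u \<partial>lborel)
          \<longlongrightarrow> (\<integral>u. indicator {0<..} u * h u \<partial>lborel)) at_top"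
  proof (rule integral_dominated_convergence_at_top[where w = "\<lambda>u. indicator {0<..} u * h u"])
    show "(\<lambda>u. indicator {0<..<t} u * h u) \<in> borel_measurable lborel" for t
    proof -
      have "set_integrable lborel {0<..<t} h"
        by (rule density_set_integrable) auto
      then show ?thesis
        unfolding set_integrable_def by (simp add: borel_measurable_integrable)
    qed
    show "integrable lborel (\<lambda>u. indicator {0<..} u * h u)"
      using integrable unfolding set_integrable_def by simp
    show "AE u in lborel. ((\<lambda>t. indicator {0<..<t} u * h u) \<longlongrightarrow> indicator {0<..} u * h u) at_top"
    proof (rule AE_I2, rule tendsto_eventually)
      fix u :: real
      show "\<forall>\<^sub>F t in at_top. indicator {0<..<t} u * h u = indicator {0<..} u * h u"
        using eventually_gt_at_top[of u] by eventually_elim (simp add: indicator_def)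
    qed
    show "\<forall>\<^sub>F t in at_top. AE u in lborel.
            norm (indicator {0<..<t} u * h u) \<le> indicator {0<..} u * h u"
      using nonneg by (auto simp: indicator_def)
  qed simp
  then show ?thesis
    using normalised unfolding cdf_def set_lebesgue_integral_def by simp
qed

lemma cdf_le_exp:
  assumes "0 < x"
  shows "cdf x \<le> exp (- (x powr - \<gamma>))"
proof -
  have "cdf x * exp (1 * x powr - \<gamma>) \<le> 1"
    by (rule integrating_factor_le_limit[where f = h, OF gamma assms])
       (use assms in \<open>auto intro: cdf_has_real_derivative density_cdf_bounds(1) cdf_tendsto_1\<close>)
  then show ?thesis
    by (simp add: exp_minus field_simps)
qed

lemma exp_le_cdf:
  assumes "0 < x"
  shows "exp (- ((1 - \<alpha>) powr - \<gamma> * x powr - \<gamma>)) \<le> cdf x"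
proof -
  have "1 \<le> cdf x * exp ((1 - \<alpha>) powr - \<gamma> * x powr - \<gamma>)"
    by (rule integrating_factor_ge_limit[where f = h, OF gamma assms])
       (use assms density_cdf_bounds(2) in \<open>auto simp: mult_ac intro: cdf_has_real_derivative cdf_tendsto_1\<close>)
  then show ?thesis
    by (simp add: exp_minus field_simps)
qed

end

theorem mainTheorem3:
  fixes h :: "real \<Rightarrow> real" and \<alpha> \<gamma> :: real
  assumes alpha: "0 < \<alpha>" "\<alpha> < 1"
    and gamma: "0 < \<gamma>"
    and nonneg: "\<And>x. 0 < x \<Longrightarrow> 0 \<le> h x"
    and integrable: "set_integrable lborel {0<..} h"
    and normalised: "(LINT x:{0<..}|lborel. h x) = 1"
    and eqn: "\<And>x. 0 < x \<Longrightarrow>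
       h x = \<gamma> / x * (LINT u:{0<..<x}|lborel. h u / (x - \<alpha> * u) powr \<gamma>)"
  shows "\<forall>x>0. 0 < h x \<and>
     \<gamma> * x powr (-\<gamma> - 1) * exp (- ((1 - \<alpha>) powr (-\<gamma>) * x powr (-\<gamma>))) \<le> h x \<and>
     h x \<le> \<gamma> * (1 - \<alpha>) powr (-\<gamma>) * x powr (-\<gamma> - 1) * exp (- (x powr (-\<gamma>)))"
proof -
  interpret density_equation h \<alpha> \<gamma>
    using assms by unfold_locales
  show ?thesis
  proof (intro allI impI conjI)
    fix x :: real
    assume x: "0 < x"
    have "0 \<le> \<gamma> * x powr (-\<gamma> - 1)" "0 \<le> \<gamma> * (1 - \<alpha>) powr (-\<gamma>) * x powr (-\<gamma> - 1)"
      using gamma by simp_all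
    from mult_left_mono[OF exp_le_cdf[OF x] this(1)] mult_left_mono[OF cdf_le_exp[OF x] this(2)]
    show lower: "\<gamma> * x powr (-\<gamma> - 1) * exp (- ((1 - \<alpha>) powr (-\<gamma>) * x powr (-\<gamma>))) \<le> h x"
      and "h x \<le> \<gamma> * (1 - \<alpha>) powr (-\<gamma>) * x powr (-\<gamma> - 1) * exp (- (x powr (-\<gamma>)))"
      using density_cdf_bounds[OF x] by linarith+
    have "0 < \<gamma> * x powr (-\<gamma> - 1) * exp (- ((1 - \<alpha>) powr (-\<gamma>) * x powr (-\<gamma>)))"
      using gamma x by simp
    with lower show "0 < h x" by linarith
  qed
qed

end
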